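(* For positive integers $n<m$, $f(S_m,\overline{K_n})=n+m-1$, and this value is achieved by the complete bipartite graph $K_{n,m-1}$ (i.e. $K_{n,m-1}$ is $(S_m,\overline{K_n})$-full).
   Context: All graphs are finite and simple. $S_m=K_{1,m-1}$ is the star with $m$ vertices; $\overline{K_n}$ is the edgeless graph on $n$ vertices. A graph $G$ is $(H_1,H_2)$-full if every vertex of $G$ belongs to an induced subgraph isomorphic to $H_1$ and to an induced subgraph isomorphic to $H_2$; $f(H_1,H_2)$ is the minimum order of an $(H_1,H_2)$-full graph. *)

theory Defs
  imports Main
begin

type_synonym 'a graph = "'a set \<times> ('a \<Rightarrow> 'a \<Rightarrow> bool)"

definition verts :: "'a graph \<Rightarrow> 'a set" where "verts G = fst G"
definition adj :: "'a graph \<Rightarrow> 'a \<Rightarrow> 'a \<Rightarrow> bool" where "adj G = snd G"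

definition simple_graph :: "'a graph \<Rightarrow> bool" where
  "simple_graph G \<longleftrightarrow> finite (verts G) \<and> verts G \<noteq> {} \<and>
     (\<forall>u v. adj G u v \<longrightarrow> u \<in> verts G \<and> v \<in> verts G \<and> u \<noteq> v \<and> adj G v u)"

definition induced_embedding :: "'b graph \<Rightarrow> 'a graph \<Rightarrow> ('b \<Rightarrow> 'a) \<Rightarrow> bool" where
  "induced_embedding H G phi \<longleftrightarrow> inj_on phi (verts H) \<and> phi ` verts H \<subseteq> verts G \<and>
     (\<forall>u\<in>verts H. \<forall>v\<in>verts H. adj H u v \<longleftrightarrow> adj G (phi u) (phi v))"

definition in_induced_copy :: "'b graph \<Rightarrow> 'a graph \<Rightarrow> 'a \<Rightarrow> bool" where
  "in_induced_copy H G v \<longleftrightarrow> (\<exists>phi. induced_embedding H G phi \<and> v \<in> phi ` verts H)"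

definition is_full :: "'b graph \<Rightarrow> 'c graph \<Rightarrow> 'a graph \<Rightarrow> bool" where
  "is_full H1 H2 G \<longleftrightarrow> (\<forall>v\<in>verts G. in_induced_copy H1 G v \<and> in_induced_copy H2 G v)"

text \<open>Minimum order of an (H1,H2)-full graph (graphs up to isomorphism, so vertices in nat).\<close>
definition f_full :: "'b graph \<Rightarrow> 'c graph \<Rightarrow> nat" where
  "f_full H1 H2 = (LEAST k. \<exists>G :: nat graph. simple_graph G \<and> card (verts G) = k \<and> is_full H1 H2 G)"

definition star :: "nat \<Rightarrow> nat graph" where
  "star m = ({0..<m}, \<lambda>u v. u < m \<and> v < m \<and> u \<noteq> v \<and> (u = 0 \<or> v = 0))"

definition edgeless :: "nat \<Rightarrow> nat graph" where
  "edgeless n = ({0..<n}, \<lambda>u v. False)"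

definition complete_bipartite :: "nat \<Rightarrow> nat \<Rightarrow> nat graph" where
  "complete_bipartite a b = ({0..<a+b}, \<lambda>u v. u < a + b \<and> v < a + b \<and> ((u < a) \<noteq> (v < a)))"

end

theory Submission
  imports Defs
begin

text \<open>Lower bound: the centre c of an induced star has m - 1 neighbours, and an
  independent set of size n through c contains none of them.
  Upper bound: in K_{n,m-1} every vertex lies in a star centred in the part of size n whose
  leaves are the whole part of size m - 1, and both parts are independent sets of size
  at least n.\<close>

lemma verts_star [simp]: "verts (star m) = {0..<m}"
  and adj_star [simp]: "adj (star m) u v \<longleftrightarrow> u < m \<and> v < m \<and> u \<noteq> v \<and> (u = 0 \<or> v = 0)"
  by (simp_all add: star_def verts_def adj_def)

lemma verts_edgeless [simp]: "verts (edgeless n) = {0..<n}"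
  and adj_edgeless [simp]: "\<not> adj (edgeless n) u v"
  by (simp_all add: edgeless_def verts_def adj_def)

lemma verts_complete_bipartite [simp]: "verts (complete_bipartite a b) = {0..<a+b}"
  and adj_complete_bipartite [simp]:
    "adj (complete_bipartite a b) u v \<longleftrightarrow> u < a + b \<and> v < a + b \<and> ((u < a) \<noteq> (v < a))"
  by (simp_all add: complete_bipartite_def verts_def adj_def)

lemma simple_graph_complete_bipartite: "0 < a + b \<Longrightarrow> simple_graph (complete_bipartite a b)"
  by (auto simp: simple_graph_def)

lemma induced_embedding_adj_iff:
  "induced_embedding H G phi \<Longrightarrow> u \<in> verts H \<Longrightarrow> v \<in> verts H \<Longrightarrow>
    adj G (phi u) (phi v) \<longleftrightarrow> adj H u v"
  by (simp add: induced_embedding_def)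

definition independent :: "'a graph \<Rightarrow> 'a set \<Rightarrow> bool" where
  "independent G I \<longleftrightarrow> I \<subseteq> verts G \<and> (\<forall>u\<in>I. \<forall>v\<in>I. \<not> adj G u v)"

lemma independent_subset: "independent G I \<Longrightarrow> J \<subseteq> I \<Longrightarrow> independent G J"
  by (auto simp: independent_def)

lemma independent_complete_bipartite:
  "independent (complete_bipartite a b) {0..<a}"
  "independent (complete_bipartite a b) {a..<a+b}"
  by (auto simp: independent_def)

lemma in_induced_copy_edgeless_iff:
  "in_induced_copy (edgeless n) G v \<longleftrightarrow> (\<exists>I. independent G I \<and> finite I \<and> card I = n \<and> v \<in> I)"
proof
  assume "in_induced_copy (edgeless n) G v"
  then obtain psi where psi: "induced_embedding (edgeless n) G psi" and v: "v \<in> psi ` {0..<n}"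
    by (auto simp: in_induced_copy_def)
  have "independent G (psi ` {0..<n})"
    using psi by (auto simp: induced_embedding_def independent_def)
  moreover have "card (psi ` {0..<n}) = n"
    using psi by (simp add: induced_embedding_def card_image)
  ultimately show "\<exists>I. independent G I \<and> finite I \<and> card I = n \<and> v \<in> I"
    using v by blast
next
  assume "\<exists>I. independent G I \<and> finite I \<and> card I = n \<and> v \<in> I"
  then obtain I where I: "independent G I" "finite I" "card I = n" "v \<in> I"
    by blast
  then obtain h where "bij_betw h {0..<n} I"
    using ex_bij_betw_nat_finite by blast
  then have "inj_on h {0..<n}" and h_img: "h ` {0..<n} = I"
    by (simp_all add: bij_betw_def)
  then have "induced_embedding (edgeless n) G h"
    using I(1) by (auto simp: induced_embedding_def independent_def)
  then show "in_induced_copy (edgeless n) G v"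
    using h_img I(4) by (auto simp: in_induced_copy_def)
qed

lemma in_induced_copy_star_centre:
  assumes "in_induced_copy (star m) G v"
  obtains c L where "0 < m" "c \<in> verts G" "L \<subseteq> verts G" "card L = m - 1" "\<forall>u\<in>L. adj G c u"
proof -
  obtain phi where phi: "induced_embedding (star m) G phi" and "v \<in> phi ` {0..<m}"
    using assms by (auto simp: in_induced_copy_def)
  then have "0 < m" by auto
  moreover have "inj_on phi {1..<m}"
    using phi by (auto simp: induced_embedding_def intro: inj_on_subset)
  then have "card (phi ` {1..<m}) = m - 1"
    by (simp add: card_image)
  moreover have "adj G (phi 0) (phi i)" if "0 < i" "i < m" for i
    using induced_embedding_adj_iff[OF phi, of 0 i] that by simp
  ultimately show thesis
    using phi by (intro that[of "phi 0" "phi ` {1..<m}"]) (auto simp: induced_embedding_def)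
qed

lemma in_induced_copy_starI:
  assumes G: "simple_graph G" and c: "c \<in> verts G" and L: "finite L" "card L = m - 1"
    and nbrs: "\<forall>u\<in>L. adj G c u" and indep: "independent G L"
    and m: "0 < m" and v: "v \<in> insert c L"
  shows "in_induced_copy (star m) G v"
proof -
  obtain h where "bij_betw h {0..<m - 1} L"
    using ex_bij_betw_nat_finite L by metis
  then have h_inj: "inj_on h {0..<m - 1}" and h_img: "h ` {0..<m - 1} = L"
    by (simp_all add: bij_betw_def)
  define phi where "phi i = (if i = 0 then c else h (i - 1))" for i
  have "c \<notin> L"
    using nbrs G by (auto simp: simple_graph_def)
  have leaf: "phi i \<in> L" if "0 < i" "i < m" for i
    using that h_img by (auto simp: phi_def)
  have "inj_on phi {0..<m}"
  proof (rule inj_onI)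
    fix i j assume "i \<in> {0..<m}" "j \<in> {0..<m}" "phi i = phi j"
    then show "i = j"
      using leaf[of i] leaf[of j] \<open>c \<notin> L\<close>
      by (cases "i = 0"; cases "j = 0") (auto simp: phi_def dest: inj_onD[OF h_inj])
  qed
  moreover have "phi ` {0..<m} \<subseteq> verts G"
    using c leaf indep by (auto simp: independent_def phi_def)
  moreover have "adj (star m) i j \<longleftrightarrow> adj G (phi i) (phi j)" if "i < m" "j < m" for i j
    using that leaf[of i] leaf[of j] nbrs indep G
    by (cases "i = 0"; cases "j = 0") (auto simp: phi_def independent_def simple_graph_def)
  ultimately have "induced_embedding (star m) G phi"
    by (auto simp: induced_embedding_def)
  moreover have "insert c L \<subseteq> phi ` {0..<m}"
  proof
    fix u assume "u \<in> insert c L"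
    then consider "u = phi 0" | i where "i < m - 1" "u = phi (Suc i)"
      using h_img by (auto simp: phi_def)
    then show "u \<in> phi ` {0..<m}"
      by cases (use m in auto)
  qed
  ultimately show ?thesis
    using v by (auto simp: in_induced_copy_def)
qed

lemma card_verts_ge_if_full:
  assumes G: "simple_graph G" and full: "is_full (star m) (edgeless n) G"
  shows "n + m - 1 \<le> card (verts G)"
proof -
  have fin: "finite (verts G)" and "verts G \<noteq> {}"
    using G by (auto simp: simple_graph_def)
  then obtain v where "v \<in> verts G" by blast
  then obtain c L where "0 < m" and c: "c \<in> verts G" and L: "L \<subseteq> verts G" "card L = m - 1"
    and nbrs: "\<forall>u\<in>L. adj G c u"
    using full in_induced_copy_star_centre by (metis is_full_def)
  obtain I where I: "independent G I" "card I = n" "c \<in> I"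
    using full c by (auto simp: is_full_def in_induced_copy_edgeless_iff)
  have "finite L" "finite I"
    using L I fin by (auto simp: independent_def intro: finite_subset)
  moreover have "L \<inter> I = {}"
    using nbrs I by (auto simp: independent_def)
  ultimately have "card (L \<union> I) = (m - 1) + n"
    using L I by (simp add: card_Un_disjoint)
  moreover have "card (L \<union> I) \<le> card (verts G)"
    using L I fin by (intro card_mono) (auto simp: independent_def)
  ultimately show ?thesis
    using \<open>0 < m\<close> by linarith
qed

lemma obtain_subset_with_card_containing:
  assumes "finite S" "v \<in> S" "0 < n" "n \<le> card S"
  obtains T where "T \<subseteq> S" "finite T" "card T = n" "v \<in> T"
proof -
  obtain T where T: "T \<subseteq> S - {v}" "card T = n - 1" "finite T"
    using assms by (metis obtain_subset_with_card_n card_Diff_singleton diff_le_mono)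
  then have "card (insert v T) = n"
    using assms by (auto simp: card_insert_if)
  then show thesis
    using T assms by (intro that[of "insert v T"]) auto
qed

lemma is_full_complete_bipartite:
  assumes "0 < n" "n < m"
  shows "is_full (star m) (edgeless n) (complete_bipartite n (m - 1))"
  unfolding is_full_def
proof
  let ?K = "complete_bipartite n (m - 1)"
  let ?A = "{0..<n}" and ?B = "{n..<n + (m - 1)}"
  fix v assume v: "v \<in> verts ?K"
  have G: "simple_graph ?K"
    using assms by (simp add: simple_graph_complete_bipartite)
  have star: "in_induced_copy (star m) ?K v" if "c \<in> ?A" "v \<in> insert c ?B" for c
  proof (rule in_induced_copy_starI[OF G])
    show "\<forall>u\<in>?B. adj ?K c u"
      using that by auto
    show "independent ?K ?B"
      by (rule independent_complete_bipartite(2))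
  qed (use that assms in simp_all)
  have edgeless: "in_induced_copy (edgeless n) ?K v"
    if S: "independent ?K S" "finite S" "v \<in> S" "n \<le> card S" for S
  proof -
    obtain T where T: "T \<subseteq> S" "finite T" "card T = n" "v \<in> T"
      by (rule obtain_subset_with_card_containing[OF S(2,3) assms(1) S(4)])
    then have "independent ?K T"
      using independent_subset[OF S(1)] by blast
    then show ?thesis
      unfolding in_induced_copy_edgeless_iff using T by blast
  qed
  show "in_induced_copy (star m) ?K v \<and> in_induced_copy (edgeless n) ?K v"
  proof (cases "v < n")
    case True
    then show ?thesis
      using star[of v] edgeless[OF independent_complete_bipartite(1)] by simp
  next
    case False
    then show ?thesis
      using v assms star[of 0] edgeless[OF independent_complete_bipartite(2)] by simp
  qed
qed

lemma f_full_eqI: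
  fixes G :: "nat graph"
  assumes "simple_graph G" "is_full H1 H2 G" "card (verts G) = k"
    and "\<And>G' :: nat graph. simple_graph G' \<Longrightarrow> is_full H1 H2 G' \<Longrightarrow> k \<le> card (verts G')"
  shows "f_full H1 H2 = k"
  unfolding f_full_def
proof (rule Least_equality)
  show "\<exists>G :: nat graph. simple_graph G \<and> card (verts G) = k \<and> is_full H1 H2 G"
    using assms(1-3) by blast
qed (use assms(4) in blast)

theorem claim4p1:
  fixes n m :: nat
  assumes "0 < n" and "n < m"
  shows "f_full (star m) (edgeless n) = n + m - 1
       \<and> simple_graph (complete_bipartite n (m - 1))
       \<and> is_full (star m) (edgeless n) (complete_bipartite n (m - 1))"
proof -
  have simple: "simple_graph (complete_bipartite n (m - 1))"
    using assms by (simp add: simple_graph_complete_bipartite)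
  have full: "is_full (star m) (edgeless n) (complete_bipartite n (m - 1))"
    using assms by (rule is_full_complete_bipartite)
  have "card (verts (complete_bipartite n (m - 1))) = n + m - 1"
    using assms by simp
  then have "f_full (star m) (edgeless n) = n + m - 1"
    using simple full card_verts_ge_if_full by (intro f_full_eqI) auto
  with simple full show ?thesis by blast
qed

end
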